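(* If $(S,K,I)$ is a split graph and $C$ is an induced cycle in the factor graph $\Phi(S)$, then $|C|\leq 5$.
   Context: A split graph $(S,K,I)$ is a graph $S$ together with a fixed partition $V(S)=K\dot\cup I$, where $K$ is a clique and $I$ is an independent set. For a vertex $v$ of $S$, $N_v$ denotes its open neighborhood in $S$ and $d_v=|N_v|$; $\eta_{uv}=|N_u\cap N_v|$. The factor graph $\Phi(S)$ is the loopless multigraph with vertex set $I$ in which, for distinct $u,v\in I$, there is one edge joining $u$ and $v$ for each 2-switch of $S$ acting on $u$ and $v$ (a 2-switch replaces edges $ab,cd$ with $ac,bd$ when $ab,cd\in E(S)$ and $ac,bd\notin E(S)$); equivalently, the multiplicity of $uv$ is $\sigma_{uv}=(d_u-\eta_{uv})(d_v-\eta_{uv})$, and $u,v$ are adjacent iff $\sigma_{uv}>0$. An induced cycle $C=v_1\ldots v_nv_1$ ($n\geq 3$) in $\Phi(S)$ consists of distinct vertices with $v_iv_{i+1}$ and $v_nv_1$ adjacent and no other pair adjacent (multiplicities ignored); $|C|=n$ is its number of vertices. *)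

theory Defs
  imports Main
begin

definition split_graph :: "'a set \<Rightarrow> ('a \<Rightarrow> 'a \<Rightarrow> bool) \<Rightarrow> 'a set \<Rightarrow> 'a set \<Rightarrow> bool" where
  "split_graph V E K I \<longleftrightarrow>
     finite V \<and>
     (\<forall>u v. E u v \<longrightarrow> u \<in> V \<and> v \<in> V) \<and>
     (\<forall>u v. E u v \<longrightarrow> E v u) \<and>
     (\<forall>v. \<not> E v v) \<and>
     K \<union> I = V \<and> K \<inter> I = {} \<and>
     (\<forall>u\<in>K. \<forall>v\<in>K. u \<noteq> v \<longrightarrow> E u v) \<and>
     (\<forall>u\<in>I. \<forall>v\<in>I. \<not> E u v)"

definition nbhd :: "'a set \<Rightarrow> ('a \<Rightarrow> 'a \<Rightarrow> bool) \<Rightarrow> 'a \<Rightarrow> 'a set" where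
  "nbhd V E v = {w \<in> V. E v w}"

definition deg :: "'a set \<Rightarrow> ('a \<Rightarrow> 'a \<Rightarrow> bool) \<Rightarrow> 'a \<Rightarrow> nat" where
  "deg V E v = card (nbhd V E v)"

definition eta :: "'a set \<Rightarrow> ('a \<Rightarrow> 'a \<Rightarrow> bool) \<Rightarrow> 'a \<Rightarrow> 'a \<Rightarrow> nat" where
  "eta V E u v = card (nbhd V E u \<inter> nbhd V E v)"

text \<open>Multiplicity of the edge uv in the factor graph (number of 2-switches on u, v).\<close>
definition sigma :: "'a set \<Rightarrow> ('a \<Rightarrow> 'a \<Rightarrow> bool) \<Rightarrow> 'a \<Rightarrow> 'a \<Rightarrow> nat" where
  "sigma V E u v = (deg V E u - eta V E u v) * (deg V E v - eta V E u v)"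

text \<open>Adjacency in the factor graph Phi(S) (vertex set I, multiplicities ignored).\<close>
definition factor_adj :: "'a set \<Rightarrow> ('a \<Rightarrow> 'a \<Rightarrow> bool) \<Rightarrow> 'a set \<Rightarrow> 'a \<Rightarrow> 'a \<Rightarrow> bool" where
  "factor_adj V E I u v \<longleftrightarrow> u \<in> I \<and> v \<in> I \<and> u \<noteq> v \<and> sigma V E u v > 0"

definition factor_induced_cycle :: "'a set \<Rightarrow> ('a \<Rightarrow> 'a \<Rightarrow> bool) \<Rightarrow> 'a set \<Rightarrow> 'a list \<Rightarrow> bool" where
  "factor_induced_cycle V E I C \<longleftrightarrow>
     length C \<ge> 3 \<and> distinct C \<and> set C \<subseteq> I \<and>
     (\<forall>i < length C. \<forall>j < length C.
        factor_adj V E I (C ! i) (C ! j) \<longleftrightarrow>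
        (j = (i + 1) mod length C \<or> i = (j + 1) mod length C))"

end

theory Submission
  imports Defs "HOL-Number_Theory.Cong"
begin

text \<open>Two vertices of \<open>I\<close> are adjacent in \<open>\<Phi>(S)\<close> exactly when their neighbourhoods are
  incomparable under inclusion, so non-adjacency in \<open>\<Phi>(S)\<close> is a comparability relation.
  On an induced cycle with at least six vertices pick a vertex whose neighbourhood is
  smallest. Its two neighbours on the cycle are incomparable with it, while the two vertices
  at distance two are comparable with it and hence, by minimality, contain it. Following the
  forced inclusions along the remaining non-adjacent pairs of the five consecutive vertices
  leads to a contradiction.\<close>

definition incomparable :: "'a set \<Rightarrow> 'a set \<Rightarrow> bool" where
  "incomparable A B \<longleftrightarrow> \<not> A \<subseteq> B \<and> \<not> B \<subseteq> A"

lemma card_Int_less_iff_not_subset: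
  assumes "finite A"
  shows "card (A \<inter> B) < card A \<longleftrightarrow> \<not> A \<subseteq> B"
proof -
  have "card (A \<inter> B) \<le> card A"
    using assms by (simp add: card_mono)
  moreover have "card (A \<inter> B) = card A \<longleftrightarrow> A \<inter> B = A"
    using card_subset_eq[OF assms Int_lower1] by auto
  ultimately show ?thesis
    by (auto simp: Int_absorb2)
qed

lemma subset_if_comparable_card_le:
  assumes "finite A" "A \<subseteq> B \<or> B \<subseteq> A" "card A \<le> card B"
  shows "A \<subseteq> B"
  using assms card_seteq by blast

lemma finite_nbhd: "finite V \<Longrightarrow> finite (nbhd V E v)"
  unfolding nbhd_def by simp

lemma deg_minus_eta_pos_iff:
  assumes "finite V"
  shows "0 < deg V E u - eta V E u v \<longleftrightarrow> \<not> nbhd V E u \<subseteq> nbhd V E v"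
  using card_Int_less_iff_not_subset[OF finite_nbhd[OF assms]]
  unfolding deg_def eta_def by simp

lemma sigma_pos_iff:
  assumes "finite V"
  shows "0 < sigma V E u v \<longleftrightarrow> incomparable (nbhd V E u) (nbhd V E v)"
proof -
  have "eta V E v u = eta V E u v"
    unfolding eta_def by (simp add: Int_commute)
  then show ?thesis
    unfolding sigma_def incomparable_def
    using deg_minus_eta_pos_iff[OF assms, of E u v] deg_minus_eta_pos_iff[OF assms, of E v u]
    by simp
qed

lemma factor_adj_iff_incomparable:
  assumes "finite V"
  shows "factor_adj V E I u v \<longleftrightarrow>
    u \<in> I \<and> v \<in> I \<and> u \<noteq> v \<and> incomparable (nbhd V E u) (nbhd V E v)"
  unfolding factor_adj_def sigma_pos_iff[OF assms] ..

lemma no_incomparability_path_with_smallest_middle: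
  fixes A :: "nat \<Rightarrow> 'a set"
  assumes "finite (A 2)"
    and smallest: "\<And>j. j < 5 \<Longrightarrow> card (A 2) \<le> card (A j)"
    and path: "\<And>i j. i < 5 \<Longrightarrow> j < 5 \<Longrightarrow> i \<noteq> j \<Longrightarrow>
      incomparable (A i) (A j) \<longleftrightarrow> j = Suc i \<or> i = Suc j"
  shows False
proof -
  have comparable: "A i \<subseteq> A j \<or> A j \<subseteq> A i"
    if "i < 5" "j < 5" "i \<noteq> j" "j \<noteq> Suc i" "i \<noteq> Suc j" for i j
    using path[OF that(1-3)] that(4,5) unfolding incomparable_def by blast
  have "incomparable (A 0) (A 1)" "incomparable (A 1) (A 2)"
    and "incomparable (A 2) (A 3)" "incomparable (A 3) (A 4)"
    using path by simp_all
  then have consecutive: "\<not> A 1 \<subseteq> A 0" "\<not> A 2 \<subseteq> A 1" "\<not> A 2 \<subseteq> A 3" "\<not> A 3 \<subseteq> A 4"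
    unfolding incomparable_def by simp_all
  have "A 2 \<subseteq> A 0" "A 2 \<subseteq> A 4"
    using comparable[of 2 0] comparable[of 2 4] smallest[of 0] smallest[of 4]
      subset_if_comparable_card_le[OF assms(1)] by simp_all
  moreover have "A 0 \<subseteq> A 3 \<or> A 3 \<subseteq> A 0" "A 1 \<subseteq> A 4 \<or> A 4 \<subseteq> A 1"
    by (rule comparable; simp)+
  ultimately have "A 3 \<subseteq> A 0" "A 1 \<subseteq> A 4"
    using consecutive by blast+
  moreover have "A 1 \<subseteq> A 3 \<or> A 3 \<subseteq> A 1"
    by (rule comparable; simp)+
  ultimately show False
    using consecutive by blast
qed

lemma add_mod_eq_add_mod_iff:
  fixes b i j n :: nat
  assumes "i < n" "j < n"
  shows "(b + i) mod n = (b + j) mod n \<longleftrightarrow> i = j"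
  using cong_add_lcancel_nat[of b i j n] assms unfolding cong_def by simp

lemma no_long_induced_incomparability_cycle:
  fixes N :: "nat \<Rightarrow> 'a set"
  assumes "5 < n"
    and finite: "\<And>i. i < n \<Longrightarrow> finite (N i)"
    and cycle: "\<And>i j. i < n \<Longrightarrow> j < n \<Longrightarrow> i \<noteq> j \<Longrightarrow>
      incomparable (N i) (N j) \<longleftrightarrow> j = Suc i mod n \<or> i = Suc j mod n"
  shows False
proof -
  obtain k where "k < n" and k_smallest: "\<And>j. j < n \<Longrightarrow> card (N k) \<le> card (N j)"
    using ex_has_least_nat[of "\<lambda>i. i < n" 0 "\<lambda>i. card (N i)"] \<open>5 < n\<close> by auto
  \<comment> \<open>\<open>P 0, \<dots>, P 4\<close> are the positions \<open>k - 2, \<dots>, k + 2\<close> on the cycle; adding \<open>n\<close>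
    avoids truncated subtraction.\<close>
  define P where "P j = (k + n - 2 + j) mod n" for j
  have "k + n - 2 + 2 = k + n" using \<open>5 < n\<close> by simp
  then have "P 2 = k" using \<open>k < n\<close> unfolding P_def by simp
  have P_less: "P j < n" for j using \<open>5 < n\<close> unfolding P_def by simp
  have P_Suc: "Suc (P j) mod n = P (Suc j)" for j unfolding P_def by (simp add: mod_Suc_eq)
  have P_eq_iff: "P i = P j \<longleftrightarrow> i = j" if "i < n" "j < n" for i j
    using add_mod_eq_add_mod_iff[OF that] unfolding P_def .
  show False
  proof (rule no_incomparability_path_with_smallest_middle[of "N \<circ> P"])
    show "finite ((N \<circ> P) 2)" using finite \<open>P 2 = k\<close> \<open>k < n\<close> by simp
    show "card ((N \<circ> P) 2) \<le> card ((N \<circ> P) j)" for j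
      using k_smallest \<open>P 2 = k\<close> P_less by simp
    show "incomparable ((N \<circ> P) i) ((N \<circ> P) j) \<longleftrightarrow> j = Suc i \<or> i = Suc j"
      if "i < 5" "j < 5" "i \<noteq> j" for i j
    proof -
      have "i < n" "j < n" "Suc i < n" "Suc j < n" using that \<open>5 < n\<close> by simp_all
      then show ?thesis
        using cycle[OF P_less P_less] P_eq_iff that unfolding P_Suc by simp
    qed
  qed
qed

theorem lemma3p1:
  fixes V K I :: "'a set" and E :: "'a \<Rightarrow> 'a \<Rightarrow> bool" and C :: "'a list"
  assumes "split_graph V E K I"
    and "factor_induced_cycle V E I C"
  shows "length C \<le> 5"
proof (rule ccontr)
  assume "\<not> length C \<le> 5"
  have "finite V" using assms(1) unfolding split_graph_def by simp
  define N where "N i = nbhd V E (C ! i)" for i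
  show False
  proof (rule no_long_induced_incomparability_cycle[of "length C" N])
    show "5 < length C" using \<open>\<not> length C \<le> 5\<close> by simp
    show "finite (N i)" for i using finite_nbhd[OF \<open>finite V\<close>] unfolding N_def .
    fix i j assume ij: "i < length C" "j < length C" "i \<noteq> j"
    then have "C ! i \<noteq> C ! j" "C ! i \<in> I" "C ! j \<in> I"
      using assms(2) nth_eq_iff_index_eq unfolding factor_induced_cycle_def by auto
    moreover have "factor_adj V E I (C ! i) (C ! j) \<longleftrightarrow>
        j = Suc i mod length C \<or> i = Suc j mod length C"
      using assms(2) ij unfolding factor_induced_cycle_def by simp
    ultimately show "incomparable (N i) (N j) \<longleftrightarrow>
        j = Suc i mod length C \<or> i = Suc j mod length C"
      unfolding factor_adj_iff_incomparable[OF \<open>finite V\<close>] N_def by simp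
  qed
qed

end
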